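(* Let $p\ge 2$ and $\delta>0$. Define $$\mathcal{G}_\delta(t):=\int_0^t\frac{s(s+\delta)^{\frac{p-2}{2}}}{\sqrt{1+\delta+s^2}}\,ds\quad(t\ge0),\qquad H_{\frac p2}(\xi)=\begin{cases}(|\xi|-1)_+^{\frac p2}\frac{\xi}{|\xi|}&\xi\ne0,\\ 0&\xi=0.\end{cases}$$ Then there is a constant $c_p>0$ depending only on $p$ such that for all $\xi,\eta\in\mathbb{R}^n$, $$\left|\mathcal{G}_\delta\left((|\xi|-\delta-1)_+\right)-\mathcal{G}_\delta\left((|\eta|-\delta-1)_+\right)\right|^2\le c_p\left|H_{\frac p2}(\xi)-H_{\frac p2}(\eta)\right|^2.$$
   Context: $(\cdot)_+$ denotes the positive part; $|\cdot|$ is the Euclidean norm. *)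

theory Defs
  imports "HOL-Analysis.Analysis"
begin

text \<open>Vectors of R^n are represented as functions nat => real, only the
coordinates i < n being relevant (so that the constant can be quantified
before the dimension n).\<close>

definition vnorm :: "nat \<Rightarrow> (nat \<Rightarrow> real) \<Rightarrow> real" where
  "vnorm n x = sqrt (\<Sum>i<n. (x i)\<^sup>2)"

definition posp :: "real \<Rightarrow> real" where
  "posp x = max x 0"

definition G_delta :: "real \<Rightarrow> real \<Rightarrow> real \<Rightarrow> real" where
  "G_delta p \<delta> t =
     integral {0..t} (\<lambda>s. s * (s + \<delta>) powr ((p - 2) / 2) / sqrt (1 + \<delta> + s\<^sup>2))"

definition H_half :: "real \<Rightarrow> nat \<Rightarrow> (nat \<Rightarrow> real) \<Rightarrow> (nat \<Rightarrow> real)" where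
  "H_half p n \<xi> = (\<lambda>i. if vnorm n \<xi> = 0 then 0
       else posp (vnorm n \<xi> - 1) powr (p / 2) * \<xi> i / vnorm n \<xi>)"

end

theory Submission
  imports Defs
begin

text \<open>The constant is c = 1. Since s \<le> sqrt (1 + \<delta> + s^2), the integrand of G_delta is at
most (s + \<delta>) powr ((p - 2) / 2), whose primitive is (2 / p) (s + \<delta>) powr (p / 2). Hence
t \<mapsto> G_delta p \<delta> (posp (t - \<delta> - 1)) is nondecreasing and its increments are dominated
by those of h t = posp (t - 1) powr (p / 2), because 2 / p \<le> 1 and
posp (t - \<delta> - 1) + \<delta> \<ge> posp (t - 1).
Finally |H(\<xi>)| = h |\<xi>|, so the reverse triangle inequality
|h |\<xi>| - h |\<eta>|| \<le> |H(\<xi>) - H(\<eta>)| concludes.\<close>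

lemma vnorm_eq_L2_set: "vnorm n x = L2_set x {..<n}"
  by (simp add: vnorm_def L2_set_def)

lemma abs_vnorm_diff_le: "\<bar>vnorm n x - vnorm n y\<bar> \<le> vnorm n (\<lambda>i. x i - y i)"
proof -
  have "L2_set x {..<n} \<le> L2_set (\<lambda>i. x i - y i) {..<n} + L2_set y {..<n}"
    using L2_set_triangle_ineq[of "\<lambda>i. x i - y i" y "{..<n}"] by simp
  moreover have "L2_set y {..<n} \<le> L2_set (\<lambda>i. y i - x i) {..<n} + L2_set x {..<n}"
    using L2_set_triangle_ineq[of "\<lambda>i. y i - x i" x "{..<n}"] by simp
  moreover have "L2_set (\<lambda>i. y i - x i) {..<n} = L2_set (\<lambda>i. x i - y i) {..<n}"
    unfolding L2_set_def by (simp add: power2_commute)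
  ultimately show ?thesis by (simp add: vnorm_eq_L2_set)
qed

lemma vnorm_H_half: "vnorm n (H_half p n \<xi>) = posp (vnorm n \<xi> - 1) powr (p / 2)"
proof (cases "vnorm n \<xi> = 0")
  case True
  then show ?thesis by (simp add: H_half_def vnorm_def posp_def)
next
  case False
  then have pos: "vnorm n \<xi> > 0"
    by (simp add: vnorm_def order_less_le sum_nonneg)
  define c where "c = posp (vnorm n \<xi> - 1) powr (p / 2) / vnorm n \<xi>"
  have "c \<ge> 0" using pos by (simp add: c_def)
  moreover have "H_half p n \<xi> = (\<lambda>i. c * \<xi> i)"
    using False by (simp add: H_half_def c_def)
  ultimately have "vnorm n (H_half p n \<xi>) = c * vnorm n \<xi>"
    by (simp add: vnorm_eq_L2_set L2_set_right_distrib)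
  then show ?thesis using pos by (simp add: c_def)
qed

lemma has_integral_shifted_powr:
  fixes r c u v :: real
  assumes "r \<noteq> -1" and "u + c > 0" and "u \<le> v"
  shows "((\<lambda>s. (s + c) powr r) has_integral
           ((v + c) powr (r + 1) - (u + c) powr (r + 1)) / (r + 1)) {u..v}"
proof -
  define F where "F t = (t + c) powr (r + 1) / (r + 1)" for t
  have "(F has_vector_derivative (x + c) powr r) (at x within {u..v})" if "x \<in> {u..v}" for x
  proof -
    have "x + c > 0" using that assms by auto
    then have "(F has_real_derivative (x + c) powr r) (at x)"
      using assms(1) unfolding F_def by (auto intro!: derivative_eq_intros)
    then show ?thesis
      by (simp add: has_real_derivative_iff_has_vector_derivative[symmetric]
          has_field_derivative_at_within)
  qed
  from fundamental_theorem_of_calculus[OF \<open>u \<le> v\<close> this]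
  show ?thesis by (simp add: F_def diff_divide_distrib)
qed

definition G_integrand :: "real \<Rightarrow> real \<Rightarrow> real \<Rightarrow> real" where
  "G_integrand p \<delta> s = s * (s + \<delta>) powr ((p - 2) / 2) / sqrt (1 + \<delta> + s\<^sup>2)"

lemma G_delta_eq_integral: "G_delta p \<delta> t = integral {0..t} (G_integrand p \<delta>)"
  by (simp add: G_delta_def G_integrand_def[abs_def])

lemma G_integrand_nonneg: "\<delta> \<ge> 0 \<Longrightarrow> s \<ge> 0 \<Longrightarrow> 0 \<le> G_integrand p \<delta> s"
  by (simp add: G_integrand_def)

lemma G_integrand_le:
  assumes "\<delta> \<ge> 0" and "s \<ge> 0"
  shows "G_integrand p \<delta> s \<le> (s + \<delta>) powr ((p - 2) / 2)"
proof -
  have "s \<le> sqrt (1 + \<delta> + s\<^sup>2)" using assms by (simp add: real_le_rsqrt)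
  moreover have "sqrt (1 + \<delta> + s\<^sup>2) > 0" using assms by (simp add: add_pos_nonneg)
  ultimately have "s / sqrt (1 + \<delta> + s\<^sup>2) \<le> 1" by simp
  have "G_integrand p \<delta> s = s / sqrt (1 + \<delta> + s\<^sup>2) * (s + \<delta>) powr ((p - 2) / 2)"
    by (simp add: G_integrand_def)
  also have "\<dots> \<le> (s + \<delta>) powr ((p - 2) / 2)"
    using \<open>s / sqrt (1 + \<delta> + s\<^sup>2) \<le> 1\<close> assms by (intro mult_left_le_one_le) auto
  finally show ?thesis .
qed

lemma continuous_on_G_integrand: "\<delta> > 0 \<Longrightarrow> continuous_on {0..t} (G_integrand p \<delta>)"
  unfolding G_integrand_def[abs_def]
  by (intro continuous_intros) (auto simp: add_nonneg_eq_0_iff)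

lemma G_delta_diff_eq_integral:
  assumes "\<delta> > 0" and "0 \<le> u" and "u \<le> v"
  shows "G_delta p \<delta> v - G_delta p \<delta> u = integral {u..v} (G_integrand p \<delta>)"
proof -
  have "G_integrand p \<delta> integrable_on {0..v}"
    using continuous_on_G_integrand[OF assms(1)] by (rule integrable_continuous_interval)
  from Henstock_Kurzweil_Integration.integral_combine[OF assms(2,3) this] show ?thesis
    by (simp add: G_delta_eq_integral)
qed

lemma G_delta_increment_bounds:
  assumes "p > 0" and "\<delta> > 0" and "0 \<le> u" and "u \<le> v"
  shows "0 \<le> G_delta p \<delta> v - G_delta p \<delta> u"
    and "G_delta p \<delta> v - G_delta p \<delta> u \<le> (2 / p) * ((v + \<delta>) powr (p / 2) - (u + \<delta>) powr (p / 2))"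
proof -
  have int_f: "G_integrand p \<delta> integrable_on {u..v}"
    using continuous_on_G_integrand[OF assms(2)] assms(3)
    by (meson atLeastatMost_subset_iff continuous_on_subset integrable_continuous_interval order_refl)
  have int_k: "((\<lambda>s. (s + \<delta>) powr ((p - 2) / 2)) has_integral
      (2 / p) * ((v + \<delta>) powr (p / 2) - (u + \<delta>) powr (p / 2))) {u..v}"
    using has_integral_shifted_powr[of "(p - 2) / 2" u \<delta> v] assms
    by (simp add: field_simps)
  have diff: "G_delta p \<delta> v - G_delta p \<delta> u = integral {u..v} (G_integrand p \<delta>)"
    using G_delta_diff_eq_integral assms(2-4) .
  show "0 \<le> G_delta p \<delta> v - G_delta p \<delta> u"
    unfolding diff using assms(2,3) by (intro integral_nonneg[OF int_f] G_integrand_nonneg) auto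
  have "integral {u..v} (G_integrand p \<delta>) \<le> integral {u..v} (\<lambda>s. (s + \<delta>) powr ((p - 2) / 2))"
    using assms(2,3) by (intro integral_le[OF int_f has_integral_integrable[OF int_k]] G_integrand_le) auto
  also have "\<dots> = (2 / p) * ((v + \<delta>) powr (p / 2) - (u + \<delta>) powr (p / 2))"
    using int_k by (rule integral_unique)
  finally show "G_delta p \<delta> v - G_delta p \<delta> u \<le> (2 / p) * ((v + \<delta>) powr (p / 2) - (u + \<delta>) powr (p / 2))"
    unfolding diff .
qed

lemma G_delta_posp_increment_bounds:
  assumes p: "p \<ge> 2" and "\<delta> > 0" and "a \<le> b"
  defines "g \<equiv> \<lambda>t. G_delta p \<delta> (posp (t - \<delta> - 1))"
    and "h \<equiv> \<lambda>t. posp (t - 1) powr (p / 2)"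
  shows "0 \<le> g b - g a \<and> g b - g a \<le> h b - h a"
proof -
  define u v where "u = posp (a - \<delta> - 1)" and "v = posp (b - \<delta> - 1)"
  have "0 \<le> u" "u \<le> v" using \<open>a \<le> b\<close> by (auto simp: u_def v_def posp_def)
  have "p > 0" using p by simp
  note bounds = G_delta_increment_bounds[OF this \<open>\<delta> > 0\<close> \<open>0 \<le> u\<close> \<open>u \<le> v\<close>]
  have g_diff: "g b - g a = G_delta p \<delta> v - G_delta p \<delta> u" by (simp add: g_def u_def v_def)
  have h_mono: "h a \<le> h b"
    unfolding h_def using \<open>a \<le> b\<close> p by (intro powr_mono2) (auto simp: posp_def)
  show ?thesis
  proof (cases "b \<le> \<delta> + 1")
    case True
    then have "v = 0" "u = 0" using \<open>a \<le> b\<close> by (auto simp: u_def v_def posp_def)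
    then show ?thesis using g_diff h_mono by simp
  next
    case False
    then have hb: "h b = (v + \<delta>) powr (p / 2)"
      using \<open>\<delta> > 0\<close> by (simp add: v_def h_def posp_def)
    have "posp (a - 1) \<le> u + \<delta>" using \<open>\<delta> > 0\<close> by (simp add: u_def posp_def)
    then have ha: "h a \<le> (u + \<delta>) powr (p / 2)"
      unfolding h_def using p by (intro powr_mono2) (auto simp: posp_def)
    have "(u + \<delta>) powr (p / 2) \<le> (v + \<delta>) powr (p / 2)"
      using \<open>u \<le> v\<close> \<open>0 \<le> u\<close> \<open>\<delta> > 0\<close> p by (intro powr_mono2) auto
    have "g b - g a \<le> (2 / p) * ((v + \<delta>) powr (p / 2) - (u + \<delta>) powr (p / 2))"
      using bounds(2) g_diff by simp
    also have "\<dots> \<le> (v + \<delta>) powr (p / 2) - (u + \<delta>) powr (p / 2)"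
      using \<open>(u + \<delta>) powr (p / 2) \<le> (v + \<delta>) powr (p / 2)\<close> p
      by (intro mult_left_le_one_le) auto
    also have "\<dots> \<le> h b - h a"
      using ha hb by simp
    finally show ?thesis using bounds(1) g_diff by linarith
  qed
qed

lemma abs_G_delta_posp_diff_le:
  assumes "p \<ge> 2" and "\<delta> > 0"
  shows "\<bar>G_delta p \<delta> (posp (a - \<delta> - 1)) - G_delta p \<delta> (posp (b - \<delta> - 1))\<bar>
    \<le> \<bar>posp (a - 1) powr (p / 2) - posp (b - 1) powr (p / 2)\<bar>"
proof (cases "a \<le> b")
  case True
  from G_delta_posp_increment_bounds[OF assms True] show ?thesis by linarith
next
  case False
  then have "b \<le> a" by simp
  from G_delta_posp_increment_bounds[OF assms this] show ?thesis by linarith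
qed

theorem mainTheorem4:
  fixes p :: real
  assumes "p \<ge> 2"
  shows "\<exists>c>0. \<forall>\<delta>>0. \<forall>n. \<forall>\<xi> \<eta> :: nat \<Rightarrow> real.
    (G_delta p \<delta> (posp (vnorm n \<xi> - \<delta> - 1)) - G_delta p \<delta> (posp (vnorm n \<eta> - \<delta> - 1)))\<^sup>2
      \<le> c * (vnorm n (\<lambda>i. H_half p n \<xi> i - H_half p n \<eta> i))\<^sup>2"
proof (intro exI[of _ 1] conjI allI impI)
  fix \<delta> :: real and n and \<xi> \<eta> :: "nat \<Rightarrow> real"
  assume "\<delta> > 0"
  have "\<bar>G_delta p \<delta> (posp (vnorm n \<xi> - \<delta> - 1)) - G_delta p \<delta> (posp (vnorm n \<eta> - \<delta> - 1))\<bar>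
      \<le> \<bar>vnorm n (H_half p n \<xi>) - vnorm n (H_half p n \<eta>)\<bar>" (is "\<bar>?d\<bar> \<le> _")
    using abs_G_delta_posp_diff_le[OF assms \<open>\<delta> > 0\<close>] by (simp add: vnorm_H_half)
  also have "\<dots> \<le> vnorm n (\<lambda>i. H_half p n \<xi> i - H_half p n \<eta> i)"
    by (rule abs_vnorm_diff_le)
  finally have "\<bar>?d\<bar> \<le> vnorm n (\<lambda>i. H_half p n \<xi> i - H_half p n \<eta> i)" .
  from power_mono[OF this abs_ge_zero, of 2]
  show "?d\<^sup>2 \<le> 1 * (vnorm n (\<lambda>i. H_half p n \<xi> i - H_half p n \<eta> i))\<^sup>2" by simp
qed simp

end
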